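(* Let $k\ge2$ and let $z_{ij}\in\mathbb{C}$, $1\le i<j\le k$, satisfy $|z_{ij}|\le1$; set $z_{ji}=\overline{z_{ij}}$. Then the linear map $\Phi_{2k}^{(\mathbf z)}:M_{2k}(\mathbb{C})\to M_{2k}(\mathbb{C})$ defined below is positive.
   Context: Write $X\in M_{2k}(\mathbb{C})$ as a $k\times k$ block matrix $X=(X_{ij})_{i,j=1}^k$ with $X_{ij}\in M_2(\mathbb{C})$. Let $R_2:M_2(\mathbb{C})\to M_2(\mathbb{C})$, $R_2(Y)=\mathbb{I}_2\operatorname{Tr}Y-Y$. Define $\Phi_{2k}^{(\mathbf z)}(X)$ as the $k\times k$ block matrix with diagonal blocks $\frac{1}{2(k-1)}(\operatorname{Tr}X-\operatorname{Tr}X_{ii})\mathbb{I}_2$ and, for $i\ne j$, off-diagonal blocks $-\frac{z_{ij}}{2(k-1)}\big(X_{ij}-R_2(X_{ji})\big)$. (For all $z_{ij}=1$ this is the generalized Robertson map $\Phi_{2k}$.) A linear map is positive if it sends positive semidefinite matrices to positive semidefinite matrices. *)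

theory Defs
  imports Complex_Main
begin

text \<open>Square complex matrices of size n are represented as functions
  nat \<Rightarrow> nat \<Rightarrow> complex; only entries with indices < n are relevant.
  A 2k x 2k matrix is viewed as k x k block matrix of 2x2 blocks: the row index
  a corresponds to block i = a div 2 and position r = a mod 2 inside the block
  (indices are 0-based).\<close>

type_synonym cmat = "nat \<Rightarrow> nat \<Rightarrow> complex"

definition mtrace :: "nat \<Rightarrow> cmat \<Rightarrow> complex" where
  "mtrace n X = (\<Sum>a<n. X a a)"

definition psd :: "nat \<Rightarrow> cmat \<Rightarrow> bool" where
  "psd n A \<longleftrightarrow> (\<forall>a<n. \<forall>b<n. A b a = cnj (A a b)) \<and>
     (\<forall>x :: nat \<Rightarrow> complex. 0 \<le> Re (\<Sum>a<n. \<Sum>b<n. cnj (x a) * A a b * x b))"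

definition positive_map :: "nat \<Rightarrow> (cmat \<Rightarrow> cmat) \<Rightarrow> bool" where
  "positive_map n \<Phi> \<longleftrightarrow> (\<forall>X. psd n X \<longrightarrow> psd n (\<Phi> X))"

definition blk :: "cmat \<Rightarrow> nat \<Rightarrow> nat \<Rightarrow> cmat" where
  "blk X i j = (\<lambda>r s. X (2*i + r) (2*j + s))"

definition R2 :: "cmat \<Rightarrow> cmat" where
  "R2 Y = (\<lambda>r s. (if r = s then mtrace 2 Y else 0) - Y r s)"

definition Phi_z :: "nat \<Rightarrow> (nat \<Rightarrow> nat \<Rightarrow> complex) \<Rightarrow> cmat \<Rightarrow> cmat" where
  "Phi_z k z X = (\<lambda>a b.
     let i = a div 2; r = a mod 2; j = b div 2; s = b mod 2 in
     if i = j then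
       (if r = s then (mtrace (2*k) X - mtrace 2 (blk X i i)) / (2 * (of_nat k - 1)) else 0)
     else - z i j / (2 * (of_nat k - 1)) * (blk X i j r s - R2 (blk X j i) r s))"

end

theory Submission
  imports Defs
begin

(* Write a 2k-vector x as k blocks x_l in C^2 and let t_l = Tr X_ll, v_l = |x_l|^2.
   The quadratic form of Phi(X) splits into 2x2 block terms (sform_blocks): the
   diagonal terms equal (Tr X - t_l) v_l / (2(k-1)), and each off-diagonal term is
   -Re(z_lm B_lm(x_l, x_m)) / (2(k-1)), where B is the "twisted" form of the block
   pair X_lm - R_2(X_ml).  The key estimate (twisted_form_bound) is
     2 Re(z B(u, w)) <= Tr(X_mm) |u|^2 + Tr(X_ll) |w|^2   for |z| <= 1,
   proved on the PSD 4x4 compression of X to the blocks l, m: writing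
   B(u, w) = <(u,0), X (0,w)> - <(0,Jw), X (Ju,0)> with the spin flip
   J(a, b) = (-conj b, conj a), both terms are bounded by the Cauchy-Schwarz type
   inequality psd_cross_bound, and |u|^2 Tr A = <u,Au> + <Ju,AJu>.  Summing the
   resulting lower bounds over all block pairs gives exactly zero
   (pair_weight_sum_zero), which proves positivity. *)

definition sform :: "nat \<Rightarrow> cmat \<Rightarrow> (nat \<Rightarrow> complex) \<Rightarrow> (nat \<Rightarrow> complex) \<Rightarrow> complex" where
  "sform n Y x y = (\<Sum>a<n. \<Sum>b<n. cnj (x a) * Y a b * y b)"

definition hermitian :: "nat \<Rightarrow> cmat \<Rightarrow> bool" where
  "hermitian n Y \<longleftrightarrow> (\<forall>a<n. \<forall>b<n. Y b a = cnj (Y a b))"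

lemma psd_iff: "psd n Y \<longleftrightarrow> hermitian n Y \<and> (\<forall>x. 0 \<le> Re (sform n Y x x))"
  unfolding psd_def hermitian_def sform_def ..

lemma sform_swap:
  assumes "hermitian n Y"
  shows "sform n Y y x = cnj (sform n Y x y)"
proof -
  have "cnj (sform n Y x y) = (\<Sum>a<n. \<Sum>b<n. cnj (y b) * Y b a * x a)"
    unfolding sform_def cnj_sum
  proof (intro sum.cong refl)
    fix a b assume "a \<in> {..<n}" "b \<in> {..<n}"
    then have "Y b a = cnj (Y a b)" using assms unfolding hermitian_def by blast
    then show "cnj (cnj (x a) * Y a b * y b) = cnj (y b) * Y b a * x a" by simp
  qed
  also have "\<dots> = sform n Y y x"
    unfolding sform_def by (rule sum.swap)
  finally show ?thesis by simp
qed

lemma sform_combination: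
  "sform n Y (\<lambda>i. a * x i + b * y i) (\<lambda>i. a * x i + b * y i) =
     cnj a * a * sform n Y x x + cnj a * b * sform n Y x y
   + cnj b * a * sform n Y y x + cnj b * b * sform n Y y y"
  unfolding sform_def sum_distrib_left sum.distrib[symmetric]
  by (intro sum.cong refl) (simp add: algebra_simps)

(* Cauchy-Schwarz type bound: nonnegativity of the form at s x - t c y. *)

lemma psd_cross_bound:
  fixes s t :: real
  assumes "psd n Y"
  shows "2 * s * t * Re (c * sform n Y x y)
           \<le> s\<^sup>2 * Re (sform n Y x x) + t\<^sup>2 * (cmod c)\<^sup>2 * Re (sform n Y y y)"
proof -
  define a b where "a = (of_real s :: complex)" and "b = - (of_real t * c)"
  have herm: "hermitian n Y" and nonneg: "\<And>v. 0 \<le> Re (sform n Y v v)"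
    using assms by (auto simp: psd_iff)
  have aa: "cnj a * a = of_real (s\<^sup>2)"
    unfolding a_def by (simp add: power2_eq_square)
  have bb: "cnj b * b = of_real (t\<^sup>2 * (cmod c)\<^sup>2)"
    unfolding b_def of_real_mult complex_norm_square by (simp add: power2_eq_square algebra_simps)
  have ab: "cnj a * b * sform n Y x y = - of_real (s * t) * (c * sform n Y x y)"
    unfolding a_def b_def by simp
  have ba: "cnj b * a * sform n Y y x = cnj (cnj a * b * sform n Y x y)"
    unfolding sform_swap[OF herm, of y x] a_def by simp
  have "Re (sform n Y (\<lambda>i. a * x i + b * y i) (\<lambda>i. a * x i + b * y i))
      = s\<^sup>2 * Re (sform n Y x x) - 2 * s * t * Re (c * sform n Y x y)
        + t\<^sup>2 * (cmod c)\<^sup>2 * Re (sform n Y y y)"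
    unfolding sform_combination ba aa bb ab by simp
  then show ?thesis
    using nonneg[of "\<lambda>i. a * x i + b * y i"] by linarith
qed

lemma sform_zero_left [simp]: "sform n Y (\<lambda>_. 0) y = 0"
  and sform_zero_right [simp]: "sform n Y x (\<lambda>_. 0) = 0"
  by (simp_all add: sform_def)

lemma lessThan_two: "{..<2::nat} = {0, 1}"
  by auto

lemma sum_blocks_of_two:
  fixes f :: "nat \<Rightarrow> 'a::comm_monoid_add"
  shows "(\<Sum>a<2*k. f a) = (\<Sum>l<k. \<Sum>r<2. f (2*l + r))"
proof (induction k)
  case 0
  then show ?case by simp
next
  case (Suc k)
  have "{..<2 * Suc k} = insert (2*k + 1) (insert (2*k) {..<2*k})"
    by auto
  then show ?case
    using Suc by (simp add: lessThan_two ac_simps)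
qed

definition bvec :: "(nat \<Rightarrow> complex) \<Rightarrow> nat \<Rightarrow> nat \<Rightarrow> complex" where
  "bvec x l = (\<lambda>r. if r < 2 then x (2*l + r) else 0)"

lemma sform_blocks:
  "sform (2*k) Y x y = (\<Sum>l<k. \<Sum>m<k. sform 2 (blk Y l m) (bvec x l) (bvec y m))"
proof -
  have "sform (2*k) Y x y
      = (\<Sum>l<k. \<Sum>r<2. \<Sum>m<k. \<Sum>s<2. cnj (x (2*l+r)) * Y (2*l+r) (2*m+s) * y (2*m+s))"
    unfolding sform_def by (simp only: sum_blocks_of_two)
  also have "\<dots> = (\<Sum>l<k. \<Sum>m<k. \<Sum>r<2. \<Sum>s<2. cnj (x (2*l+r)) * Y (2*l+r) (2*m+s) * y (2*m+s))"
    by (rule sum.cong[OF refl], rule sum.swap)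
  finally show ?thesis
    by (simp add: sform_def blk_def bvec_def)
qed

lemma mtrace_blocks: "mtrace (2*k) X = (\<Sum>l<k. mtrace 2 (blk X l l))"
  by (simp add: mtrace_def blk_def sum_blocks_of_two)

lemma hermitian_mtrace_real:
  assumes "hermitian n X"
  shows "cnj (mtrace n X) = mtrace n X"
proof -
  have "cnj (X a a) = X a a" if "a < n" for a
    using assms that unfolding hermitian_def by (metis complex_cnj_cnj)
  then show ?thesis by (simp add: mtrace_def)
qed

lemma hermitian_diag_blk:
  assumes "hermitian (2*k) X" "l < k"
  shows "hermitian 2 (blk X l l)"
proof -
  have "2*l + r < 2*k" if "r < 2" for r using assms(2) that by linarith
  then show ?thesis using assms(1) unfolding hermitian_def blk_def by blast
qed

definition idx :: "nat \<Rightarrow> nat \<Rightarrow> nat \<Rightarrow> nat" where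
  "idx i j a = (if a < 2 then 2*i + a else 2*j + (a - 2))"

definition compress :: "cmat \<Rightarrow> nat \<Rightarrow> nat \<Rightarrow> cmat" where
  "compress X i j = (\<lambda>a b. X (idx i j a) (idx i j b))"

lemma psd_compress:
  assumes psd: "psd (2*k) X" and ij: "i < k" "j < k" "i \<noteq> j"
  shows "psd 4 (compress X i j)"
  unfolding psd_iff
proof
  have "idx i j a < 2*k" if "a < 4" for a
    using ij that by (auto simp: idx_def)
  then show "hermitian 4 (compress X i j)"
    using psd unfolding psd_iff hermitian_def compress_def by blast
next
  show "\<forall>y. 0 \<le> Re (sform 4 (compress X i j) y y)"
  proof
    fix y :: "nat \<Rightarrow> complex"
    define x where "x a = (if a div 2 = i then y (a mod 2) else if a div 2 = j then y (2 + a mod 2) else 0)"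
      for a
    define G where "G l m = sform 2 (blk X l m) (bvec x l) (bvec x m)" for l m
    have bx: "bvec x l = (if l = i then bvec y 0 else if l = j then bvec y 1 else (\<lambda>_. 0))" for l
      using ij(3) by (auto simp: bvec_def x_def lessThan_two less_2_cases_iff)
    have G_zero: "G l m = 0" if "l \<notin> {i, j} \<or> m \<notin> {i, j}" for l m
      using that by (auto simp: G_def bx)
    have "sform (2*k) X x x = (\<Sum>l<k. \<Sum>m\<in>{i,j}. G l m)"
      unfolding sform_blocks G_def[symmetric]
      using ij by (intro sum.cong refl sum.mono_neutral_right) (auto simp: G_zero)
    also have "\<dots> = (\<Sum>l\<in>{i,j}. \<Sum>m\<in>{i,j}. G l m)"
      using ij by (intro sum.mono_neutral_right) (auto simp: G_zero)
    also have "\<dots> = sform 4 (compress X i j) y y"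
      using ij(3) unfolding G_def bx by (simp add: sform_def blk_def bvec_def compress_def idx_def
          eval_nat_numeral algebra_simps)
    finally show "0 \<le> Re (sform 4 (compress X i j) y y)"
      using psd unfolding psd_iff by metis
  qed
qed

definition vnorm2 :: "nat \<Rightarrow> (nat \<Rightarrow> complex) \<Rightarrow> real" where
  "vnorm2 n u = (\<Sum>r<n. (cmod (u r))\<^sup>2)"

lemma vnorm2_two: "of_real (vnorm2 2 u) = u 0 * cnj (u 0) + u 1 * cnj (u 1)"
proof -
  have "vnorm2 2 u = (cmod (u 0))\<^sup>2 + (cmod (u 1))\<^sup>2"
    by (simp add: vnorm2_def lessThan_two)
  then show ?thesis by (simp only: of_real_add complex_norm_square)
qed

(* For a 4x4 matrix Y = [[A, B], [C, D]] (2x2 blocks), the twisted form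
   u^* (B - R_2(C)) w, which is what the off-diagonal blocks of Phi contribute. *)

definition twisted_form :: "cmat \<Rightarrow> (nat \<Rightarrow> complex) \<Rightarrow> (nat \<Rightarrow> complex) \<Rightarrow> complex" where
  "twisted_form Y u w = (\<Sum>r<2. \<Sum>s<2. cnj (u r) * (blk Y 0 1 r s - R2 (blk Y 1 0) r s) * w s)"

definition lift0 :: "(nat \<Rightarrow> complex) \<Rightarrow> nat \<Rightarrow> complex" where
  "lift0 u = (\<lambda>i. if i < 2 then u i else 0)"

definition lift1 :: "(nat \<Rightarrow> complex) \<Rightarrow> nat \<Rightarrow> complex" where
  "lift1 w = (\<lambda>i. if 2 \<le> i then w (i - 2) else 0)"

definition jflip :: "(nat \<Rightarrow> complex) \<Rightarrow> nat \<Rightarrow> complex" where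
  "jflip u = (\<lambda>r. if r = 0 then - cnj (u 1) else cnj (u 0))"

lemma twisted_form_decomp:
  "twisted_form Y u w = sform 4 Y (lift0 u) (lift1 w) - sform 4 Y (lift1 (jflip w)) (lift0 (jflip u))"
  by (simp add: twisted_form_def sform_def lift0_def lift1_def jflip_def blk_def R2_def mtrace_def
      eval_nat_numeral algebra_simps)

lemma jflip_pair_top:
  "sform 4 Y (lift0 u) (lift0 u) + sform 4 Y (lift0 (jflip u)) (lift0 (jflip u))
     = of_real (vnorm2 2 u) * mtrace 2 (blk Y 0 0)"
  unfolding vnorm2_two by (simp add: sform_def lift0_def jflip_def blk_def mtrace_def
      eval_nat_numeral algebra_simps)

lemma jflip_pair_bottom:
  "sform 4 Y (lift1 w) (lift1 w) + sform 4 Y (lift1 (jflip w)) (lift1 (jflip w))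
     = of_real (vnorm2 2 w) * mtrace 2 (blk Y 1 1)"
  unfolding vnorm2_two by (simp add: sform_def lift1_def jflip_def blk_def mtrace_def
      eval_nat_numeral algebra_simps)

lemma psd_two_block_traces:
  assumes "psd 4 Y"
  shows "0 \<le> Re (mtrace 2 (blk Y 0 0))" and "0 \<le> Re (mtrace 2 (blk Y 1 1))"
proof -
  have nonneg: "0 \<le> Re (sform 4 Y v v)" for v
    using assms unfolding psd_iff by blast
  have two: "vnorm2 2 (\<lambda>_. 1) = 2"
    by (simp add: vnorm2_def)
  show "0 \<le> Re (mtrace 2 (blk Y 0 0))"
    using arg_cong[OF jflip_pair_top[of Y "\<lambda>_. 1"], of Re] nonneg[of "lift0 (\<lambda>_. 1)"]
      nonneg[of "lift0 (jflip (\<lambda>_. 1))"] unfolding two by simp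
  show "0 \<le> Re (mtrace 2 (blk Y 1 1))"
    using arg_cong[OF jflip_pair_bottom[of Y "\<lambda>_. 1"], of Re] nonneg[of "lift1 (\<lambda>_. 1)"]
      nonneg[of "lift1 (jflip (\<lambda>_. 1))"] unfolding two by simp
qed

(* The key estimate, multiplied through by |u|^2 |w|^2 to avoid division. *)

lemma twisted_form_scaled_bound:
  fixes u w :: "nat \<Rightarrow> complex" and z :: complex
  assumes psd: "psd 4 Y"
  defines "nu \<equiv> vnorm2 2 u" and "A \<equiv> vnorm2 2 w"
  shows "A * nu * (2 * Re (z * twisted_form Y u w))
           \<le> A * nu * (A * Re (mtrace 2 (blk Y 0 0)) + nu * (cmod z)\<^sup>2 * Re (mtrace 2 (blk Y 1 1)))"
proof -
  define Q where "Q x = Re (sform 4 Y x x)" for x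
  define p q m n where "p = lift0 u" and "q = lift1 w"
    and "m = lift0 (jflip u)" and "n = lift1 (jflip w)"
  have cross1: "2 * A * nu * Re (z * sform 4 Y p q) \<le> A\<^sup>2 * Q p + nu\<^sup>2 * (cmod z)\<^sup>2 * Q q"
    unfolding Q_def by (rule psd_cross_bound[OF psd])
  have "2 * A * nu * Re (- cnj z * sform 4 Y m n) \<le> A\<^sup>2 * Q m + nu\<^sup>2 * (cmod z)\<^sup>2 * Q n"
    using psd_cross_bound[OF psd, of A nu "- cnj z" m n] unfolding Q_def by simp
  moreover have "Re (- cnj z * sform 4 Y m n) = - Re (z * sform 4 Y n m)"
  proof -
    have "hermitian 4 Y" using psd by (simp add: psd_iff)
    then have "- cnj z * sform 4 Y m n = cnj (- z * sform 4 Y n m)"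
      by (simp add: sform_swap[of 4 Y m n])
    then have "Re (- cnj z * sform 4 Y m n) = Re (- z * sform 4 Y n m)"
      by (metis cnj.sel(1))
    then show ?thesis by simp
  qed
  ultimately have cross2:
    "- (2 * A * nu * Re (z * sform 4 Y n m)) \<le> A\<^sup>2 * Q m + nu\<^sup>2 * (cmod z)\<^sup>2 * Q n"
    by (metis mult_minus_right)
  have split: "Re (z * twisted_form Y u w) = Re (z * sform 4 Y p q) - Re (z * sform 4 Y n m)"
    unfolding twisted_form_decomp p_def q_def m_def n_def
    by (simp add: algebra_simps del: times_complex.sel)
  have "A * nu * (2 * Re (z * twisted_form Y u w))
      \<le> A\<^sup>2 * (Q p + Q m) + nu\<^sup>2 * (cmod z)\<^sup>2 * (Q q + Q n)"
    unfolding split using cross1 cross2 by (simp add: algebra_simps del: times_complex.sel)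
  also have "Q p + Q m = nu * Re (mtrace 2 (blk Y 0 0))"
    using arg_cong[OF jflip_pair_top[of Y u], of Re] unfolding Q_def p_def m_def nu_def by simp
  also have "Q q + Q n = A * Re (mtrace 2 (blk Y 1 1))"
    using arg_cong[OF jflip_pair_bottom[of Y w], of Re] unfolding Q_def q_def n_def A_def by simp
  finally show ?thesis
    by (simp add: power2_eq_square algebra_simps)
qed

lemma twisted_form_bound:
  assumes psd: "psd 4 Y" and z: "cmod z \<le> 1"
  shows "2 * Re (z * twisted_form Y u w)
           \<le> Re (mtrace 2 (blk Y 1 1)) * vnorm2 2 u + Re (mtrace 2 (blk Y 0 0)) * vnorm2 2 w"
proof -
  define tA tC nu A where "tA = Re (mtrace 2 (blk Y 0 0))" and "tC = Re (mtrace 2 (blk Y 1 1))"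
    and "nu = vnorm2 2 u" and "A = vnorm2 2 w"
  have traces: "0 \<le> tA" "0 \<le> tC"
    using psd_two_block_traces[OF psd] unfolding tA_def tC_def by auto
  have norms: "0 \<le> nu" "0 \<le> A"
    unfolding nu_def A_def vnorm2_def by (simp_all add: sum_nonneg)
  have "2 * Re (z * twisted_form Y u w) \<le> A * tA + nu * tC"
  proof (cases "nu = 0 \<or> A = 0")
    case True
    then have "(u 0 = 0 \<and> u 1 = 0) \<or> (w 0 = 0 \<and> w 1 = 0)"
      unfolding nu_def A_def vnorm2_def lessThan_two by (auto simp: add_nonneg_eq_0_iff)
    then have "twisted_form Y u w = 0"
      by (auto simp: twisted_form_def lessThan_two)
    then show ?thesis using traces norms by simp
  next
    case False
    then have pos: "0 < A * nu" using norms by auto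
    have "(cmod z)\<^sup>2 * tC \<le> tC"
      using z traces by (simp add: mult_left_le_one_le power_le_one)
    then have "A * nu * (A * tA + nu * (cmod z)\<^sup>2 * tC) \<le> A * nu * (A * tA + nu * tC)"
      using pos norms by (simp add: mult_left_mono mult.assoc)
    with twisted_form_scaled_bound[OF psd, where u = u and w = w and z = z]
    have "A * nu * (2 * Re (z * twisted_form Y u w)) \<le> A * nu * (A * tA + nu * tC)"
      unfolding tA_def tC_def nu_def A_def by linarith
    then show ?thesis
      using pos by (rule mult_left_le_imp_le)
  qed
  then show ?thesis
    unfolding tA_def tC_def nu_def A_def by (simp add: ac_simps del: times_complex.sel)
qed

(* Lower bounds for the block terms of the quadratic form of Phi (up to the factor
   1/(2(k-1))); they sum to zero because sum_l (T - t_l) v_l = sum_{l<>m} t_m v_l. *)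

definition pair_weight :: "(nat \<Rightarrow> real) \<Rightarrow> (nat \<Rightarrow> real) \<Rightarrow> nat set \<Rightarrow> nat \<Rightarrow> nat \<Rightarrow> real" where
  "pair_weight t v K l m =
     (if l = m then (sum t K - t l) * v l else - (t m * v l + t l * v m) / 2)"

lemma pair_weight_sum_zero:
  assumes "finite K"
  shows "(\<Sum>l\<in>K. \<Sum>m\<in>K. pair_weight t v K l m) = 0"
proof -
  have split: "pair_weight t v K l m = (if l = m then sum t K * v l else 0) - (t m * v l + t l * v m) / 2"
    for l m by (simp add: pair_weight_def field_simps)
  have "(\<Sum>l\<in>K. \<Sum>m\<in>K. t m * v l) = sum t K * sum v K"
    by (subst sum.swap) (simp add: sum_product)
  moreover have "(\<Sum>l\<in>K. \<Sum>m\<in>K. t l * v m) = sum t K * sum v K"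
    by (simp add: sum_product)
  ultimately show ?thesis
    using assms unfolding split
    by (simp add: sum_subtractf sum.distrib sum_divide_distrib[symmetric] sum_distrib_left mult.commute)
qed

lemma div_mod_block: "r < 2 \<Longrightarrow> (2*l + r) div 2 = l \<and> (2*l + r) mod 2 = (r::nat)"
  by (auto simp: less_2_cases_iff)

lemma Phi_z_diag_entry:
  "r < 2 \<Longrightarrow> s < 2 \<Longrightarrow> Phi_z k z X (2*l + r) (2*l + s)
     = (if r = s then (mtrace (2*k) X - mtrace 2 (blk X l l)) / (2 * (of_nat k - 1)) else 0)"
  unfolding Phi_z_def Let_def using div_mod_block[of r l] div_mod_block[of s l] by simp

lemma Phi_z_offdiag_entry:
  "r < 2 \<Longrightarrow> s < 2 \<Longrightarrow> l \<noteq> m \<Longrightarrow> Phi_z k z X (2*l + r) (2*m + s)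
     = - z l m / (2 * (of_nat k - 1)) * (blk X l m r s - R2 (blk X m l) r s)"
  unfolding Phi_z_def Let_def using div_mod_block[of r l] div_mod_block[of s m] by simp

lemma Phi_z_hermitian:
  assumes X: "hermitian (2*k) X"
    and z: "\<And>l m. l < k \<Longrightarrow> m < k \<Longrightarrow> l \<noteq> m \<Longrightarrow> z m l = cnj (z l m)"
  shows "hermitian (2*k) (Phi_z k z X)"
  unfolding hermitian_def
proof (intro allI impI)
  fix a b assume ab: "a < 2*k" "b < 2*k"
  define l r m s where "l = a div 2" and "r = a mod 2" and "m = b div 2" and "s = b mod 2"
  have a: "a = 2*l + r" and b: "b = 2*m + s" and rs: "r < 2" "s < 2" and lm: "l < k" "m < k"
    using ab unfolding l_def r_def m_def s_def by auto
  show "Phi_z k z X b a = cnj (Phi_z k z X a b)"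
  proof (cases "l = m")
    case True
    have "cnj (mtrace (2*k) X) = mtrace (2*k) X" "cnj (mtrace 2 (blk X l l)) = mtrace 2 (blk X l l)"
      using hermitian_mtrace_real hermitian_diag_blk[OF X lm(1)] X by blast+
    then show ?thesis
      unfolding a b True using Phi_z_diag_entry[OF rs] Phi_z_diag_entry[OF rs(2,1)] by simp
  next
    case False
    have hX: "cnj (X c d) = X d c" if "c < 2*k" "d < 2*k" for c d
      using X that unfolding hermitian_def by (metis complex_cnj_cnj)
    show ?thesis
      unfolding a b Phi_z_offdiag_entry[OF rs False] Phi_z_offdiag_entry[OF rs(2,1) False[symmetric]]
        z[OF lm False]
      using lm rs by (simp add: blk_def R2_def mtrace_def lessThan_two hX)
  qed
qed

lemma twisted_form_compress:
  "twisted_form (compress X l m) u w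
     = (\<Sum>r<2. \<Sum>s<2. cnj (u r) * (blk X l m r s - R2 (blk X m l) r s) * w s)"
  by (simp add: twisted_form_def compress_def idx_def blk_def R2_def mtrace_def lessThan_two)

lemma compress_diag_traces:
  "mtrace 2 (blk (compress X i j) 0 0) = mtrace 2 (blk X i i)"
  "mtrace 2 (blk (compress X i j) 1 1) = mtrace 2 (blk X j j)"
  by (simp_all add: compress_def idx_def blk_def mtrace_def lessThan_two)

lemma Phi_z_diag_form:
  "sform 2 (blk (Phi_z k z X) l l) u u
     = (mtrace (2*k) X - mtrace 2 (blk X l l)) / (2 * (of_nat k - 1)) * of_real (vnorm2 2 u)"
proof -
  define c where "c = (mtrace (2*k) X - mtrace 2 (blk X l l)) / (2 * (of_nat k - 1))"
  have "blk (Phi_z k z X) l l r s = (if r = s then c else 0)" if "r < 2" "s < 2" for r s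
    using Phi_z_diag_entry[OF that] unfolding c_def blk_def .
  then show ?thesis
    unfolding c_def[symmetric] vnorm2_two by (simp add: sform_def lessThan_two algebra_simps)
qed

lemma Phi_z_offdiag_form:
  assumes "l \<noteq> m"
  shows "sform 2 (blk (Phi_z k z X) l m) u w
     = - z l m / (2 * (of_nat k - 1)) * twisted_form (compress X l m) u w"
proof -
  define c where "c = - z l m / (2 * (of_nat k - 1))"
  have entry: "blk (Phi_z k z X) l m r s = c * (blk X l m r s - R2 (blk X m l) r s)"
    if "r < 2" "s < 2" for r s
    using Phi_z_offdiag_entry[OF that assms] unfolding c_def blk_def .
  show ?thesis
    unfolding c_def[symmetric] twisted_form_compress sform_def
    by (simp add: entry lessThan_two, simp add: algebra_simps)
qed

lemma Phi_z_block_bound: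
  fixes x :: "nat \<Rightarrow> complex"
  assumes psd: "psd (2*k) X" and k: "2 \<le> k" and lm: "l < k" "m < k"
    and z: "l \<noteq> m \<Longrightarrow> cmod (z l m) \<le> 1"
  defines "t \<equiv> \<lambda>i. Re (mtrace 2 (blk X i i))" and "v \<equiv> \<lambda>i. vnorm2 2 (bvec x i)"
  shows "pair_weight t v {..<k} l m / (2 * (real k - 1))
           \<le> Re (sform 2 (blk (Phi_z k z X) l m) (bvec x l) (bvec x m))"
proof -
  have herm: "hermitian (2*k) X" using psd by (simp add: psd_iff)
  have d_pos: "0 < 2 * (real k - 1)" using k by simp
  have d: "2 * (of_nat k - 1 :: complex) = of_real (2 * (real k - 1))" by simp
  have tr: "mtrace 2 (blk X i i) = of_real (t i)" if "i < k" for i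
    using hermitian_mtrace_real[OF hermitian_diag_blk[OF herm that]] unfolding t_def
    by (metis Reals_cnj_iff of_real_Re)
  show ?thesis
  proof (cases "l = m")
    case True
    have "mtrace (2*k) X = of_real (sum t {..<k})"
      by (simp add: mtrace_blocks tr)
    then have "sform 2 (blk (Phi_z k z X) l m) (bvec x l) (bvec x m)
        = of_real ((sum t {..<k} - t l) / (2 * (real k - 1)) * v l)"
      unfolding True Phi_z_diag_form d tr[OF lm(2)] v_def by simp
    then show ?thesis unfolding True pair_weight_def by simp
  next
    case False
    have "2 * Re (z l m * twisted_form (compress X l m) (bvec x l) (bvec x m)) \<le> t m * v l + t l * v m"
      using twisted_form_bound[OF psd_compress[OF psd lm False] z[OF False]]
      unfolding compress_diag_traces t_def v_def by simp
    then have "- (t m * v l + t l * v m) / 2 / (2 * (real k - 1))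
        \<le> - Re (z l m * twisted_form (compress X l m) (bvec x l) (bvec x m)) / (2 * (real k - 1))"
      using d_pos by (intro divide_right_mono) simp_all
    moreover have "Re (sform 2 (blk (Phi_z k z X) l m) (bvec x l) (bvec x m))
        = - Re (z l m * twisted_form (compress X l m) (bvec x l) (bvec x m)) / (2 * (real k - 1))"
      unfolding Phi_z_offdiag_form[OF False] d by (simp add: diff_divide_distrib)
    ultimately show ?thesis unfolding pair_weight_def using False by simp
  qed
qed

lemma offdiag_from_upper:
  fixes z :: "nat \<Rightarrow> nat \<Rightarrow> complex"
  assumes "\<And>i j. i < j \<Longrightarrow> j < k \<Longrightarrow> cmod (z i j) \<le> 1"
    and "\<And>i j. i < j \<Longrightarrow> j < k \<Longrightarrow> z j i = cnj (z i j)"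
    and "l < k" "m < k" "l \<noteq> m"
  shows "cmod (z l m) \<le> 1 \<and> z m l = cnj (z l m)"
proof (cases "l < m")
  case True
  then show ?thesis using assms by blast
next
  case False
  then have "m < l" using assms(5) by simp
  then show ?thesis using assms(1,2,3) by (metis complex_cnj_cnj complex_mod_cnj)
qed

theorem mainTheorem7:
  fixes k :: nat and z :: "nat \<Rightarrow> nat \<Rightarrow> complex"
  assumes "k \<ge> 2"
    and "\<And>i j. i < j \<Longrightarrow> j < k \<Longrightarrow> cmod (z i j) \<le> 1"
    and "\<And>i j. i < j \<Longrightarrow> j < k \<Longrightarrow> z j i = cnj (z i j)"
  shows "positive_map (2 * k) (Phi_z k z)"
  unfolding positive_map_def
proof (intro allI impI)
  fix X assume psd: "psd (2*k) X"
  have z_bound: "cmod (z l m) \<le> 1" and z_herm: "z m l = cnj (z l m)"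
    if "l < k" "m < k" "l \<noteq> m" for l m
    using offdiag_from_upper[of k z, OF assms(2,3) that] by blast+
  have "hermitian (2*k) X"
    using psd by (simp add: psd_iff)
  then have "hermitian (2*k) (Phi_z k z X)"
    using Phi_z_hermitian z_herm by blast
  moreover have "0 \<le> Re (sform (2*k) (Phi_z k z X) x x)" for x
  proof -
    define t v where "t i = Re (mtrace 2 (blk X i i))" and "v i = vnorm2 2 (bvec x i)" for i
    have "0 = (\<Sum>l<k. \<Sum>m<k. pair_weight t v {..<k} l m) / (2 * (real k - 1))"
      by (simp add: pair_weight_sum_zero)
    also have "\<dots> = (\<Sum>l<k. \<Sum>m<k. pair_weight t v {..<k} l m / (2 * (real k - 1)))"
      by (simp add: sum_divide_distrib)
    also have "\<dots> \<le> (\<Sum>l<k. \<Sum>m<k. Re (sform 2 (blk (Phi_z k z X) l m) (bvec x l) (bvec x m)))"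
      unfolding t_def v_def
      by (intro sum_mono Phi_z_block_bound[OF psd assms(1)]) (auto intro: z_bound)
    also have "\<dots> = Re (sform (2*k) (Phi_z k z X) x x)"
      by (simp add: sform_blocks)
    finally show ?thesis .
  qed
  ultimately show "psd (2*k) (Phi_z k z X)"
    unfolding psd_iff by blast
qed

end
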